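(* Let $\mathfrak d,M,L\in\mathbb N$, $u\in\mathbb R$, $v\in(u,\infty)$, $R\in[1,\infty)$, $\varepsilon,b\in(0,\infty)$, $l=(l_0,\dots,l_L)\in\mathbb N^{L+1}$ with $l_L=1$ and $\sum_{k=1}^Ll_k(l_{k-1}+1)\le\mathfrak d$, let $D\subseteq[-b,b]^{l_0}$ be compact, let $(\Omega,\mathcal F,\mathbb P)$ be a probability space, let $X_m\colon\Omega\to D$ and $Y_m\colon\Omega\to[u,v]$, $m\in\{1,\dots,M\}$, be functions such that $(X_m,Y_m)$, $m\in\{1,\dots,M\}$, are i.i.d. random variables, let $\mathcal E(f)=\mathbb E[|f(X_1)-Y_1|^2]$ for $f\in C(D,\mathbb R)$, and let $\mathfrak E(\theta,\omega)=\frac1M\sum_{m=1}^M|\mathscr N^{\theta,l}_{u,v}(X_m(\omega))-Y_m(\omega)|^2$ for $\theta\in[-R,R]^{\mathfrak d}$, $\omega\in\Omega$. Then $\Omega\ni\omega\mapsto\sup_{\theta\in[-R,R]^{\mathfrak d}}|\mathfrak E(\theta,\omega)-\mathcal E(\mathscr N^{\theta,l}_{u,v}|_D)|\in[0,\infty]$ is $\mathcal F/\mathcal B([0,\infty])$-measurable and $$\mathbb P\Bigl(\sup_{\theta\in[-R,R]^{\mathfrak d}}|\mathfrak E(\theta)-\mathcal E(\mathscr N^{\theta,l}_{u,v}|_D)|\ge\varepsilon\Bigr)\le 2\max\Bigl\{1,\Bigl[\frac{32L\max\{1,b\}(\|l\|_\infty+1)^LR^L(v-u)}{\varepsilon}\Bigr]^{\mathfrak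 d}\Bigr\}\exp\Bigl(\frac{-\varepsilon^2M}{2(v-u)^4}\Bigr).$$
   Context: $\|\cdot\|_\infty$ is the maximum norm (also applied to $l$). For $r,s\in\mathbb N$, $k\in\mathbb N_0$, $\theta\in\mathbb R^{\mathfrak d}$ with $\mathfrak d\ge k+rs+r$, $\mathcal A^{\theta,k}_{r,s}\colon\mathbb R^s\to\mathbb R^r$ has $i$-th component $x\mapsto\sum_{j=1}^s\theta_{k+(i-1)s+j}x_j+\theta_{k+rs+i}$. $\mathfrak C_{u,v,n}$ applies $y\mapsto\max\{u,\min\{y,v\}\}$ componentwise on $\mathbb R^n$ and $\mathfrak R_n$ applies $y\mapsto\max\{y,0\}$ componentwise. With $s_k=\sum_{j=1}^kl_j(l_{j-1}+1)$, $\mathscr N^{\theta,l}_{u,v}=\mathfrak C_{u,v,l_L}\circ\mathcal A^{\theta,s_{L-1}}_{l_L,l_{L-1}}\circ\mathfrak R_{l_{L-1}}\circ\cdots\circ\mathfrak R_{l_1}\circ\mathcal A^{\theta,0}_{l_1,l_0}\colon\mathbb R^{l_0}\to\mathbb R^{l_L}$ (for $L=1$ just $\mathfrak C_{u,v,l_1}\circ\mathcal A^{\theta,0}_{l_1,l_0}$). *)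

theory Defs
  imports "HOL-Probability.Probability"
begin

text \<open>Vectors in R^n are represented as functions nat => real whose components are
the values at 1..n (1-based, as in the paper); they are 0 outside {1..n}.
Parameter vectors theta are likewise functions nat => real, read at indices 1..d.\<close>

definition affine_map :: "(nat \<Rightarrow> real) \<Rightarrow> nat \<Rightarrow> nat \<Rightarrow> nat \<Rightarrow> (nat \<Rightarrow> real) \<Rightarrow> (nat \<Rightarrow> real)" where
  "affine_map \<theta> k r s x = (\<lambda>i. if i \<in> {1..r}
      then (\<Sum>j=1..s. \<theta> (k + (i - 1) * s + j) * x j) + \<theta> (k + r * s + i) else 0)"

definition clip_map :: "real \<Rightarrow> real \<Rightarrow> nat \<Rightarrow> (nat \<Rightarrow> real) \<Rightarrow> (nat \<Rightarrow> real)" where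
  "clip_map u v n y = (\<lambda>i. if i \<in> {1..n} then max u (min (y i) v) else 0)"

definition relu_map :: "nat \<Rightarrow> (nat \<Rightarrow> real) \<Rightarrow> (nat \<Rightarrow> real)" where
  "relu_map n y = (\<lambda>i. if i \<in> {1..n} then max (y i) 0 else 0)"

definition arch_offset :: "nat list \<Rightarrow> nat \<Rightarrow> nat" where
  "arch_offset l k = (\<Sum>j=1..k. l ! j * (l ! (j - 1) + 1))"

fun hidden_layers :: "(nat \<Rightarrow> real) \<Rightarrow> nat list \<Rightarrow> nat \<Rightarrow> (nat \<Rightarrow> real) \<Rightarrow> (nat \<Rightarrow> real)" where
  "hidden_layers \<theta> l 0 x = x"
| "hidden_layers \<theta> l (Suc k) x =
     relu_map (l ! Suc k) (affine_map \<theta> (arch_offset l k) (l ! Suc k) (l ! k) (hidden_layers \<theta> l k x))"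

definition clipped_net :: "(nat \<Rightarrow> real) \<Rightarrow> nat list \<Rightarrow> real \<Rightarrow> real \<Rightarrow> (nat \<Rightarrow> real) \<Rightarrow> (nat \<Rightarrow> real)" where
  "clipped_net \<theta> l u v x =
     (let L = length l - 1 in
      clip_map u v (l ! L)
        (affine_map \<theta> (arch_offset l (L - 1)) (l ! L) (l ! (L - 1)) (hidden_layers \<theta> l (L - 1) x)))"

definition param_box :: "nat \<Rightarrow> real \<Rightarrow> (nat \<Rightarrow> real) set" where
  "param_box d R = {\<theta>. (\<forall>i\<in>{1..d}. \<bar>\<theta> i\<bar> \<le> R) \<and> (\<forall>i. i \<notin> {1..d} \<longrightarrow> \<theta> i = 0)}"

end

theory Submission
  imports Defs
begin

text \<open>
  For a fixed parameter \<open>\<theta>\<close> the losses \<open>\<bar>N\<^sup>\<theta>(X\<^sub>m) - Y\<^sub>m\<bar>\<^sup>2\<close> are i.i.d. with values in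
  \<open>[0, (v - u)\<^sup>2]\<close>, so by Hoeffding's inequality the empirical risk deviates from the risk by at
  least \<open>\<epsilon>/2\<close> with probability at most \<open>2 exp(-\<epsilon>\<^sup>2 M / (2 (v - u)\<^sup>4))\<close>.
  Layer by layer, the realization is Lipschitz in \<open>\<theta>\<close> for the maximum norm with constant
  \<open>C = L max{1,b} (max l + 1)\<^sup>L R\<^sup>L / R\<close>, so the losses are \<open>\<Lambda>\<close>-Lipschitz with \<open>\<Lambda> = 2 (v - u) C\<close>
  and the deviation is \<open>2\<Lambda>\<close>-Lipschitz. The grid of \<open>N\<^sup>d\<close> cell midpoints is \<open>R/N\<close>-dense in the box, so for
  \<open>N = \<lceil>8\<Lambda>R/\<epsilon>\<rceil>\<close> every parameter has a grid point whose deviation differs by at most \<open>\<epsilon>/4\<close>;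
  a supremum \<open>\<ge> \<epsilon>\<close> thus forces a grid point with deviation \<open>\<ge> \<epsilon>/2\<close>, and the union bound
  gives the estimate. The same approximation with ever finer grids shows that the supremum equals
  a supremum over countably many parameters, hence is measurable.
\<close>

section \<open>Realizations are Lipschitz in the parameters\<close>

definition layer_preact :: "(nat \<Rightarrow> real) \<Rightarrow> nat list \<Rightarrow> nat \<Rightarrow> (nat \<Rightarrow> real) \<Rightarrow> nat \<Rightarrow> real" where
  "layer_preact \<theta> l k x = affine_map \<theta> (arch_offset l k) (l ! Suc k) (l ! k) (hidden_layers \<theta> l k x)"

lemma hidden_layers_Suc_preact:
  "hidden_layers \<theta> l (Suc k) x = relu_map (l ! Suc k) (layer_preact \<theta> l k x)"
  by (simp add: layer_preact_def)

lemma clipped_net_eq_clip_preact: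
  "length l = Suc (Suc k) \<Longrightarrow> clipped_net \<theta> l u v x = clip_map u v (l ! Suc k) (layer_preact \<theta> l k x)"
  by (simp add: clipped_net_def layer_preact_def)

lemma abs_max_zero_diff_le: "\<bar>max (a::real) 0 - max b 0\<bar> \<le> \<bar>a - b\<bar>"
  by (simp add: max_def abs_if)

lemma abs_clip_diff_le: "\<bar>max (u::real) (min a v) - max u (min b v)\<bar> \<le> \<bar>a - b\<bar>"
  by (simp add: max_def min_def abs_if)

lemma affine_map_abs_le:
  fixes \<theta> x :: "nat \<Rightarrow> real"
  assumes \<theta>: "\<forall>i. \<bar>\<theta> i\<bar> \<le> R" and x: "\<forall>j\<in>{1..s}. \<bar>x j\<bar> \<le> H" and H: "H \<ge> 1"
  shows "\<bar>affine_map \<theta> k r s x i\<bar> \<le> (real s + 1) * R * H"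
proof -
  have R: "R \<ge> 0" using \<theta> by (metis abs_ge_zero order_trans)
  show ?thesis
  proof (cases "i \<in> {1..r}")
    case False
    then have "affine_map \<theta> k r s x i = 0" by (auto simp: affine_map_def)
    with R H show ?thesis by simp
  next
    case True
    have "\<bar>affine_map \<theta> k r s x i\<bar>
        \<le> \<bar>\<Sum>j=1..s. \<theta> (k + (i - 1) * s + j) * x j\<bar> + \<bar>\<theta> (k + r * s + i)\<bar>"
      using True by (simp add: affine_map_def abs_triangle_ineq)
    also have "\<bar>\<Sum>j=1..s. \<theta> (k + (i - 1) * s + j) * x j\<bar> \<le> (\<Sum>j=1..s. \<bar>\<theta> (k + (i - 1) * s + j) * x j\<bar>)"
      by (rule sum_abs)
    also have "\<dots> \<le> (\<Sum>j=1..s. R * H)"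
      unfolding abs_mult using \<theta> x R by (intro sum_mono mult_mono) auto
    also have "\<bar>\<theta> (k + r * s + i)\<bar> \<le> R * H"
      using \<theta> R H by (metis mult_left_mono mult.right_neutral order_trans)
    finally show ?thesis by (simp add: algebra_simps)
  qed
qed

lemma affine_map_param_diff:
  fixes \<theta> \<eta> x y :: "nat \<Rightarrow> real"
  assumes \<eta>: "\<forall>i. \<bar>\<eta> i\<bar> \<le> R" and \<delta>: "\<forall>i. \<bar>\<theta> i - \<eta> i\<bar> \<le> \<delta>"
    and x: "\<forall>j\<in>{1..s}. \<bar>x j\<bar> \<le> H" and xy: "\<forall>j\<in>{1..s}. \<bar>x j - y j\<bar> \<le> E"
    and H: "H \<ge> 1" and E: "E \<ge> 0"
  shows "\<bar>affine_map \<theta> k r s x i - affine_map \<eta> k r s y i\<bar> \<le> (real s + 1) * (\<delta> * H + R * E)"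
proof -
  have R: "R \<ge> 0" and \<delta>0: "\<delta> \<ge> 0" using \<eta> \<delta> by (metis abs_ge_zero order_trans)+
  show ?thesis
  proof (cases "i \<in> {1..r}")
    case False
    then have "affine_map \<theta> k r s x i = 0" "affine_map \<eta> k r s y i = 0"
      by (auto simp: affine_map_def)
    with R \<delta>0 H E show ?thesis by simp
  next
    case True
    have product_diff: "\<bar>a * x j - c * y j\<bar> \<le> \<delta> * H + R * E"
      if "\<bar>a - c\<bar> \<le> \<delta>" "\<bar>c\<bar> \<le> R" "j \<in> {1..s}" for a c j
    proof -
      have "a * x j - c * y j = (a - c) * x j + c * (x j - y j)" by (simp add: algebra_simps)
      then have "\<bar>a * x j - c * y j\<bar> \<le> \<bar>a - c\<bar> * \<bar>x j\<bar> + \<bar>c\<bar> * \<bar>x j - y j\<bar>"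
        by (metis abs_mult abs_triangle_ineq)
      also have "\<dots> \<le> \<delta> * H + R * E"
        using that x xy \<delta>0 R by (intro add_mono mult_mono) auto
      finally show ?thesis .
    qed
    let ?a = "\<lambda>j. \<theta> (k + (i - 1) * s + j)" and ?c = "\<lambda>j. \<eta> (k + (i - 1) * s + j)"
    have difference_eq: "affine_map \<theta> k r s x i - affine_map \<eta> k r s y i
        = (\<Sum>j=1..s. ?a j * x j - ?c j * y j) + (\<theta> (k + r * s + i) - \<eta> (k + r * s + i))"
      using True by (simp add: affine_map_def sum_subtractf)
    have "\<bar>affine_map \<theta> k r s x i - affine_map \<eta> k r s y i\<bar>
        \<le> \<bar>\<Sum>j=1..s. ?a j * x j - ?c j * y j\<bar> + \<bar>\<theta> (k + r * s + i) - \<eta> (k + r * s + i)\<bar>"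
      unfolding difference_eq by (rule abs_triangle_ineq)
    also have "\<bar>\<Sum>j=1..s. ?a j * x j - ?c j * y j\<bar> \<le> (\<Sum>j=1..s. \<bar>?a j * x j - ?c j * y j\<bar>)"
      by (rule sum_abs)
    also have "\<dots> \<le> (\<Sum>j=1..s. \<delta> * H + R * E)"
      using \<delta> \<eta> by (intro sum_mono product_diff) auto
    also have "\<bar>\<theta> (k + r * s + i) - \<eta> (k + r * s + i)\<bar> \<le> \<delta> * H + R * E"
      using \<delta> H E R \<delta>0
      by (metis add_increasing2 mult_left_mono mult_nonneg_nonneg mult.right_neutral order_trans)
    finally show ?thesis by (simp add: algebra_simps)
  qed
qed

lemma one_le_layer_growth:
  fixes B R W :: real
  assumes "B \<ge> 1" "R \<ge> 1" "W \<ge> 0"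
  shows "1 \<le> B * ((W + 1) * R) ^ k"
proof -
  have "1 \<le> ((W + 1) * R) ^ k"
    using assms by (intro one_le_power) (simp add: mult_ge1_I)
  with assms show ?thesis by (metis mult_mono' mult_1 zero_le_one)
qed

lemma hidden_layers_abs_le:
  fixes \<theta> x :: "nat \<Rightarrow> real"
  assumes \<theta>: "\<forall>i. \<bar>\<theta> i\<bar> \<le> R" and R: "R \<ge> 1" and B: "B \<ge> 1"
    and W: "\<forall>j<length l. real (l ! j) \<le> W" and x: "\<forall>j\<in>{1..l ! 0}. \<bar>x j\<bar> \<le> B"
  shows "k < length l \<Longrightarrow> j \<in> {1..l ! k} \<Longrightarrow> \<bar>hidden_layers \<theta> l k x j\<bar> \<le> B * ((W + 1) * R) ^ k"
proof (induction k arbitrary: j)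
  case 0
  then show ?case using x by simp
next
  case (Suc k)
  have "real (l ! 0) \<le> W" using W[rule_format, of 0] Suc.prems by (cases l) auto
  then have W0: "W \<ge> 0" by (meson of_nat_0_le_iff order_trans)
  have "\<bar>hidden_layers \<theta> l (Suc k) x j\<bar> \<le> \<bar>layer_preact \<theta> l k x j\<bar>"
    unfolding hidden_layers_Suc_preact using Suc.prems by (auto simp: relu_map_def max_def)
  also have "\<dots> \<le> (real (l ! k) + 1) * R * (B * ((W + 1) * R) ^ k)"
    unfolding layer_preact_def using Suc one_le_layer_growth[OF B R W0]
    by (intro affine_map_abs_le[OF \<theta>]) auto
  also have "\<dots> \<le> (W + 1) * R * (B * ((W + 1) * R) ^ k)"
    using W Suc.prems R one_le_layer_growth[OF B R W0, of k] by (intro mult_right_mono) auto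
  finally show ?case by (simp add: algebra_simps)
qed

lemma layer_preact_param_diff:
  fixes \<theta> \<eta> x :: "nat \<Rightarrow> real"
  assumes \<theta>: "\<forall>i. \<bar>\<theta> i\<bar> \<le> R" and \<eta>: "\<forall>i. \<bar>\<eta> i\<bar> \<le> R" and \<delta>: "\<forall>i. \<bar>\<theta> i - \<eta> i\<bar> \<le> \<delta>"
    and R: "R \<ge> 1" and B: "B \<ge> 1"
    and W: "\<forall>j<length l. real (l ! j) \<le> W" and x: "\<forall>j\<in>{1..l ! 0}. \<bar>x j\<bar> \<le> B"
    and k: "Suc k < length l"
  shows "\<bar>layer_preact \<theta> l k x j - layer_preact \<eta> l k x j\<bar>
    \<le> real (Suc k) * \<delta> * B * (W + 1) ^ Suc k * R ^ k"
proof -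
  have l0: "real (l ! 0) \<le> W" using W[rule_format, of 0] k by (cases l) auto
  then have W0: "W \<ge> 0" by (meson of_nat_0_le_iff order_trans)
  have \<delta>0: "\<delta> \<ge> 0" using \<delta> by (metis abs_ge_zero order_trans)
  from k show ?thesis
  proof (induction k arbitrary: j)
    case 0
    have "\<bar>layer_preact \<theta> l 0 x j - layer_preact \<eta> l 0 x j\<bar> \<le> (real (l ! 0) + 1) * (\<delta> * B + R * 0)"
      unfolding layer_preact_def using x by (intro affine_map_param_diff[OF \<eta> \<delta> _ _ B]) auto
    also have "\<dots> = (real (l ! 0) + 1) * (\<delta> * B)" by simp
    also have "\<dots> \<le> (W + 1) * (\<delta> * B)"
      using l0 \<delta>0 B by (intro mult_right_mono) auto
    finally show ?case by (simp add: algebra_simps)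
  next
    case (Suc k)
    let ?E = "real (Suc k) * \<delta> * B * (W + 1) ^ Suc k * R ^ k"
    have E: "?E \<ge> 0" using \<delta>0 B W0 R by simp
    have H: "1 \<le> B * ((W + 1) * R) ^ Suc k" by (rule one_le_layer_growth[OF B R W0])
    have hidden_bound: "\<bar>hidden_layers \<theta> l (Suc k) x i\<bar> \<le> B * ((W + 1) * R) ^ Suc k"
      if "i \<in> {1..l ! Suc k}" for i
      by (rule hidden_layers_abs_le[OF \<theta> R B W x]) (use that Suc.prems in auto)
    have hidden_diff: "\<bar>hidden_layers \<theta> l (Suc k) x i - hidden_layers \<eta> l (Suc k) x i\<bar> \<le> ?E"
      if "i \<in> {1..l ! Suc k}" for i
      unfolding hidden_layers_Suc_preact relu_map_def using that Suc
      by (auto intro: order_trans[OF abs_max_zero_diff_le])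
    have "\<bar>layer_preact \<theta> l (Suc k) x j - layer_preact \<eta> l (Suc k) x j\<bar>
        \<le> (real (l ! Suc k) + 1) * (\<delta> * (B * ((W + 1) * R) ^ Suc k) + R * ?E)"
      unfolding layer_preact_def using hidden_bound hidden_diff
      by (intro affine_map_param_diff[OF \<eta> \<delta> _ _ H E]) blast+
    also have "\<dots> \<le> (W + 1) * (\<delta> * (B * ((W + 1) * R) ^ Suc k) + R * ?E)"
      using W Suc.prems E \<delta>0 H R by (intro mult_right_mono) auto
    also have "\<dots> = real (Suc (Suc k)) * \<delta> * B * (W + 1) ^ Suc (Suc k) * R ^ Suc k"
      unfolding power_mult_distrib by (simp add: algebra_simps)
    finally show ?case .
  qed
qed

lemma param_box_abs_le: "\<theta> \<in> param_box d R \<Longrightarrow> R \<ge> 0 \<Longrightarrow> \<bar>\<theta> i\<bar> \<le> R"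
  unfolding param_box_def by (cases "i \<in> {1..d}") auto

lemma clipped_net_param_diff:
  assumes \<theta>: "\<theta> \<in> param_box d R" and \<eta>: "\<eta> \<in> param_box d R" and \<delta>: "\<forall>i. \<bar>\<theta> i - \<eta> i\<bar> \<le> \<delta>"
    and R: "R \<ge> 1" and x: "x \<in> PiE {1..l ! 0} (\<lambda>_. {-b..b})"
    and l: "length l = L + 1" "L \<ge> 1" "l ! L \<ge> 1"
  shows "\<bar>clipped_net \<theta> l u v x 1 - clipped_net \<eta> l u v x 1\<bar>
    \<le> real L * max 1 b * (real (Max (set l)) + 1) ^ L * R ^ (L - 1) * \<delta>"
proof -
  obtain k where k: "L = Suc k" using l by (cases L) auto
  have "\<bar>clipped_net \<theta> l u v x 1 - clipped_net \<eta> l u v x 1\<bar>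
      \<le> \<bar>layer_preact \<theta> l k x 1 - layer_preact \<eta> l k x 1\<bar>"
    using l k by (simp add: clipped_net_eq_clip_preact clip_map_def abs_clip_diff_le)
  also have "\<dots> \<le> real (Suc k) * \<delta> * max 1 b * (real (Max (set l)) + 1) ^ Suc k * R ^ k"
  proof (rule layer_preact_param_diff)
    show "\<forall>i. \<bar>\<theta> i\<bar> \<le> R" "\<forall>i. \<bar>\<eta> i\<bar> \<le> R"
      using \<theta> \<eta> R param_box_abs_le by auto
    show "\<forall>j\<in>{1..l ! 0}. \<bar>x j\<bar> \<le> max 1 b"
    proof
      fix j assume "j \<in> {1..l ! 0}"
      with x have "x j \<in> {-b..b}" by (auto simp: PiE_iff)
      then show "\<bar>x j\<bar> \<le> max 1 b" by auto
    qed
  qed (use \<delta> R l k in auto)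
  finally show ?thesis using k by (simp add: mult_ac)
qed

lemma clipped_net_range:
  "length l = L + 1 \<Longrightarrow> l ! L \<ge> 1 \<Longrightarrow> u \<le> v \<Longrightarrow> clipped_net \<theta> l u v x 1 \<in> {u..v}"
  by (simp add: clipped_net_def clip_map_def Let_def)

lemma measurable_hidden_layers:
  "k < length l \<Longrightarrow> j \<in> {1..l ! k} \<Longrightarrow>
    (\<lambda>x. hidden_layers \<theta> l k x j) \<in> borel_measurable (PiM {1..l ! 0} (\<lambda>_. borel))"
proof (induction k arbitrary: j)
  case 0
  then show ?case by (simp add: measurable_component_singleton)
next
  case (Suc k)
  then show ?case
    by (simp add: relu_map_def affine_map_def)
qed

lemma measurable_clipped_net:
  assumes "length l = L + 1" "L \<ge> 1" "l ! L \<ge> 1"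
  shows "(\<lambda>x. clipped_net \<theta> l u v x 1) \<in> borel_measurable (PiM {1..l ! 0} (\<lambda>_. borel))"
proof -
  obtain k where k: "L = Suc k" using assms by (cases L) auto
  have "\<And>j. j \<in> {1..l ! k} \<Longrightarrow>
      (\<lambda>x. hidden_layers \<theta> l k x j) \<in> borel_measurable (PiM {1..l ! 0} (\<lambda>_. borel))"
    using assms k by (intro measurable_hidden_layers) auto
  with assms k show ?thesis
    by (simp add: clipped_net_eq_clip_preact clip_map_def layer_preact_def affine_map_def)
qed

lemma abs_square_dist_diff_le:
  fixes a a' y :: real
  assumes "a \<in> {u..v}" and "a' \<in> {u..v}" and "y \<in> {u..v}"
  shows "\<bar>\<bar>a - y\<bar> ^ 2 - \<bar>a' - y\<bar> ^ 2\<bar> \<le> 2 * (v - u) * \<bar>a - a'\<bar>"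
proof -
  have "\<bar>\<bar>a - y\<bar> ^ 2 - \<bar>a' - y\<bar> ^ 2\<bar> = \<bar>a + a' - 2 * y\<bar> * \<bar>a - a'\<bar>"
    by (simp add: power2_eq_square abs_mult[symmetric] algebra_simps)
  also have "\<dots> \<le> 2 * (v - u) * \<bar>a - a'\<bar>"
    using assms by (intro mult_right_mono) auto
  finally show ?thesis .
qed

lemma clipped_net_sq_loss_range:
  assumes "length l = L + 1" and "l ! L \<ge> 1" and y: "y \<in> {u..v}"
  shows "\<bar>clipped_net \<theta> l u v x 1 - y\<bar> ^ 2 \<in> {0..(v - u) ^ 2}"
proof -
  have "clipped_net \<theta> l u v x 1 \<in> {u..v}" using assms by (intro clipped_net_range) auto
  with y have "\<bar>clipped_net \<theta> l u v x 1 - y\<bar> \<le> v - u" by auto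
  then have "\<bar>clipped_net \<theta> l u v x 1 - y\<bar> ^ 2 \<le> (v - u) ^ 2" by (intro power_mono) auto
  then show ?thesis by simp
qed

lemma clipped_net_sq_loss_param_diff:
  assumes \<theta>: "\<theta> \<in> param_box d R" and \<eta>: "\<eta> \<in> param_box d R" and \<delta>: "\<forall>i. \<bar>\<theta> i - \<eta> i\<bar> \<le> \<delta>"
    and R: "R \<ge> 1" and x: "x \<in> PiE {1..l ! 0} (\<lambda>_. {-b..b})" and y: "y \<in> {u..v}"
    and l: "length l = L + 1" "L \<ge> 1" "l ! L \<ge> 1"
  shows "\<bar>\<bar>clipped_net \<theta> l u v x 1 - y\<bar> ^ 2 - \<bar>clipped_net \<eta> l u v x 1 - y\<bar> ^ 2\<bar>
    \<le> 2 * (v - u) * (real L * max 1 b * (real (Max (set l)) + 1) ^ L * R ^ (L - 1)) * \<delta>"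
proof -
  have "u \<le> v" using y by simp
  have "\<bar>\<bar>clipped_net \<theta> l u v x 1 - y\<bar> ^ 2 - \<bar>clipped_net \<eta> l u v x 1 - y\<bar> ^ 2\<bar>
      \<le> 2 * (v - u) * \<bar>clipped_net \<theta> l u v x 1 - clipped_net \<eta> l u v x 1\<bar>"
    using y l \<open>u \<le> v\<close> by (intro abs_square_dist_diff_le clipped_net_range) auto
  also have "\<dots> \<le> 2 * (v - u) * (real L * max 1 b * (real (Max (set l)) + 1) ^ L * R ^ (L - 1) * \<delta>)"
    using \<open>u \<le> v\<close> by (intro mult_left_mono clipped_net_param_diff[OF \<theta> \<eta> \<delta> R x l]) auto
  finally show ?thesis by (simp add: mult_ac)
qed

section \<open>Grids in the parameter box\<close>

definition grid_coord :: "real \<Rightarrow> nat \<Rightarrow> nat \<Rightarrow> real" where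
  "grid_coord R N j = -R + (2 * real j + 1) * R / real N"

definition param_grid :: "nat \<Rightarrow> real \<Rightarrow> nat \<Rightarrow> (nat \<Rightarrow> real) set" where
  "param_grid d R N =
     (\<lambda>f i. if i \<in> {1..d} then grid_coord R N (f i) else 0) ` PiE {1..d} (\<lambda>_. {..<N})"

lemma finite_param_grid: "finite (param_grid d R N)"
  unfolding param_grid_def by (intro finite_imageI finite_PiE) auto

lemma card_param_grid_le: "card (param_grid d R N) \<le> N ^ d"
proof -
  have "card (param_grid d R N) \<le> card (PiE {1..d} (\<lambda>_. {..<N}))"
    unfolding param_grid_def by (intro card_image_le finite_PiE) auto
  then show ?thesis by (simp add: card_PiE)
qed

lemma abs_grid_coord_le:
  assumes "R \<ge> 0" and "j < N"
  shows "\<bar>grid_coord R N j\<bar> \<le> R"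
proof -
  have "(2 * real j + 1) * R \<le> 2 * real N * R" using assms by (intro mult_right_mono) auto
  then have "(2 * real j + 1) * R / real N \<le> 2 * R" using assms by (simp add: divide_le_eq mult_ac)
  with assms show ?thesis unfolding grid_coord_def by (simp add: abs_le_iff)
qed

lemma param_grid_subset_param_box: "R \<ge> 0 \<Longrightarrow> param_grid d R N \<subseteq> param_box d R"
  unfolding param_grid_def param_box_def using abs_grid_coord_le by (force simp: PiE_iff)

lemma grid_coord_approx:
  assumes R: "R > 0" and N: "N \<ge> 1" and t: "\<bar>t\<bar> \<le> R"
  obtains j where "j < N" and "\<bar>t - grid_coord R N j\<bar> \<le> R / real N"
proof -
  define s where "s = (t + R) * real N / (2 * R)"
  have s: "0 \<le> s" "s \<le> real N"
    using t R N unfolding s_def by (auto simp: abs_le_iff divide_le_eq)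
  define j where "j = min (N - 1) (nat \<lfloor>s\<rfloor>)"
  have "j < N" using N unfolding j_def by simp
  have j: "real j \<le> s" "s \<le> real j + 1"
    using s N unfolding j_def by (auto simp: min_def of_nat_diff) linarith+
  have "t - grid_coord R N j = (2 * s - 2 * real j - 1) * (R / real N)"
    unfolding grid_coord_def s_def using R N by (simp add: field_simps)
  also have "\<bar>\<dots>\<bar> = \<bar>2 * s - 2 * real j - 1\<bar> * (R / real N)"
    using R by (simp add: abs_mult)
  also have "\<dots> \<le> 1 * (R / real N)"
    using j R by (intro mult_right_mono) auto
  finally have "\<bar>t - grid_coord R N j\<bar> \<le> R / real N" by simp
  with \<open>j < N\<close> show ?thesis by (rule that)
qed

lemma param_grid_approx:
  assumes R: "R > 0" and N: "N \<ge> 1" and \<theta>: "\<theta> \<in> param_box d R"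
  obtains \<eta> where "\<eta> \<in> param_grid d R N" and "\<forall>i. \<bar>\<theta> i - \<eta> i\<bar> \<le> R / real N"
proof -
  have "\<forall>i\<in>{1..d}. \<exists>j. j < N \<and> \<bar>\<theta> i - grid_coord R N j\<bar> \<le> R / real N"
  proof
    fix i assume "i \<in> {1..d}"
    with \<theta> have "\<bar>\<theta> i\<bar> \<le> R" unfolding param_box_def by auto
    then obtain j where "j < N" "\<bar>\<theta> i - grid_coord R N j\<bar> \<le> R / real N"
      by (rule grid_coord_approx[OF R N])
    then show "\<exists>j. j < N \<and> \<bar>\<theta> i - grid_coord R N j\<bar> \<le> R / real N" by blast
  qed
  from bchoice[OF this] obtain f
    where f: "\<forall>i\<in>{1..d}. f i < N \<and> \<bar>\<theta> i - grid_coord R N (f i)\<bar> \<le> R / real N" ..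
  let ?\<eta> = "\<lambda>i. if i \<in> {1..d} then grid_coord R N (restrict f {1..d} i) else 0"
  have "restrict f {1..d} \<in> PiE {1..d} (\<lambda>_. {..<N})" using f by simp
  then have "?\<eta> \<in> param_grid d R N" unfolding param_grid_def by (rule imageI)
  moreover have "\<forall>i. \<bar>\<theta> i - ?\<eta> i\<bar> \<le> R / real N"
    using f \<theta> R unfolding param_box_def by auto
  ultimately show ?thesis by (rule that)
qed

lemma real_nat_ceiling_half_power_le:
  fixes K :: real
  assumes "K > 0"
  shows "real (nat \<lceil>K / 2\<rceil>) ^ d \<le> max 1 (K ^ d)"
proof -
  have "real (nat \<lceil>K / 2\<rceil>) \<le> max 1 K"
  proof (cases "K \<le> 2")
    case True
    then have "\<lceil>K / 2\<rceil> \<le> 1" using assms by (simp add: ceiling_le_iff)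
    then show ?thesis by linarith
  next
    case False
    then show ?thesis using assms by linarith
  qed
  then have "real (nat \<lceil>K / 2\<rceil>) ^ d \<le> max 1 K ^ d" by (intro power_mono) auto
  also have "\<dots> = max 1 (K ^ d)"
  proof (cases "K \<le> 1")
    case True
    moreover from True assms have "K ^ d \<le> 1" by (simp add: power_le_one)
    ultimately show ?thesis by (simp add: max_absorb1)
  next
    case False
    then show ?thesis by (simp add: max_absorb2 one_le_power)
  qed
  finally show ?thesis .
qed

section \<open>Uniform deviation over the parameter box\<close>

lemma borel_measurable_SUP_abs_dense:
  fixes F :: "'p \<Rightarrow> 'a \<Rightarrow> real"
  assumes Q: "countable Q" "Q \<subseteq> \<Theta>"
    and dense: "\<And>\<theta> e. \<theta> \<in> \<Theta> \<Longrightarrow> e > 0 \<Longrightarrow> \<exists>\<eta>\<in>Q. \<forall>\<omega>\<in>space M. \<bar>F \<theta> \<omega> - F \<eta> \<omega>\<bar> \<le> e"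
    and meas: "\<And>\<eta>. \<eta> \<in> Q \<Longrightarrow> F \<eta> \<in> borel_measurable M"
  shows "(\<lambda>\<omega>. SUP \<theta>\<in>\<Theta>. ennreal \<bar>F \<theta> \<omega>\<bar>) \<in> borel_measurable M"
proof -
  have "(SUP \<theta>\<in>\<Theta>. ennreal \<bar>F \<theta> \<omega>\<bar>) = (SUP \<eta>\<in>Q. ennreal \<bar>F \<eta> \<omega>\<bar>)" if \<omega>: "\<omega> \<in> space M" for \<omega>
  proof (rule antisym)
    show "(SUP \<theta>\<in>\<Theta>. ennreal \<bar>F \<theta> \<omega>\<bar>) \<le> (SUP \<eta>\<in>Q. ennreal \<bar>F \<eta> \<omega>\<bar>)"
    proof (rule SUP_least, rule ennreal_le_epsilon)
      fix \<theta> and e :: real assume \<theta>: "\<theta> \<in> \<Theta>" and e: "0 < e"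
      obtain \<eta> where \<eta>: "\<eta> \<in> Q" "\<bar>F \<theta> \<omega> - F \<eta> \<omega>\<bar> \<le> e" using dense[OF \<theta> e] \<omega> by blast
      have "ennreal \<bar>F \<theta> \<omega>\<bar> \<le> ennreal (\<bar>F \<eta> \<omega>\<bar> + e)" using \<eta>(2) by (intro ennreal_leI) auto
      also have "\<dots> = ennreal \<bar>F \<eta> \<omega>\<bar> + ennreal e" using e by (simp add: ennreal_plus)
      also have "\<dots> \<le> (SUP \<eta>\<in>Q. ennreal \<bar>F \<eta> \<omega>\<bar>) + ennreal e"
        by (intro add_right_mono SUP_upper \<eta>(1))
      finally show "ennreal \<bar>F \<theta> \<omega>\<bar> \<le> (SUP \<eta>\<in>Q. ennreal \<bar>F \<eta> \<omega>\<bar>) + ennreal e" .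
    qed
    show "(SUP \<eta>\<in>Q. ennreal \<bar>F \<eta> \<omega>\<bar>) \<le> (SUP \<theta>\<in>\<Theta>. ennreal \<bar>F \<theta> \<omega>\<bar>)"
      using Q(2) by (rule SUP_subset_mono) simp
  qed
  moreover have "(\<lambda>\<omega>. SUP \<eta>\<in>Q. ennreal \<bar>F \<eta> \<omega>\<bar>) \<in> borel_measurable M"
    using Q(1) meas by measurable
  ultimately show ?thesis by (subst measurable_cong) auto
qed

lemma (in finite_measure) measure_SUP_abs_ge_le_sum_net:
  fixes F :: "'p \<Rightarrow> 'a \<Rightarrow> real"
  assumes G: "finite G" and \<delta>: "0 \<le> \<delta>" "2 * \<delta> < \<epsilon>"
    and net: "\<And>\<theta>. \<theta> \<in> \<Theta> \<Longrightarrow> \<exists>\<eta>\<in>G. \<forall>\<omega>\<in>space M. \<bar>F \<theta> \<omega> - F \<eta> \<omega>\<bar> \<le> \<delta>"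
    and meas: "\<And>\<eta>. \<eta> \<in> G \<Longrightarrow> F \<eta> \<in> borel_measurable M"
  shows "measure M {\<omega> \<in> space M. ennreal \<epsilon> \<le> (SUP \<theta>\<in>\<Theta>. ennreal \<bar>F \<theta> \<omega>\<bar>)}
    \<le> (\<Sum>\<eta>\<in>G. measure M {\<omega> \<in> space M. \<epsilon> / 2 \<le> \<bar>F \<eta> \<omega>\<bar>})"
proof -
  have sets: "{\<omega> \<in> space M. \<epsilon> / 2 \<le> \<bar>F \<eta> \<omega>\<bar>} \<in> sets M" if "\<eta> \<in> G" for \<eta>
    using meas[OF that] by measurable
  have "{\<omega> \<in> space M. ennreal \<epsilon> \<le> (SUP \<theta>\<in>\<Theta>. ennreal \<bar>F \<theta> \<omega>\<bar>)}
      \<subseteq> (\<Union>\<eta>\<in>G. {\<omega> \<in> space M. \<epsilon> / 2 \<le> \<bar>F \<eta> \<omega>\<bar>})"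
  proof (intro subsetI)
    fix \<omega> assume "\<omega> \<in> {\<omega> \<in> space M. ennreal \<epsilon> \<le> (SUP \<theta>\<in>\<Theta>. ennreal \<bar>F \<theta> \<omega>\<bar>)}"
    then have \<omega>: "\<omega> \<in> space M" and ge: "ennreal \<epsilon> \<le> (SUP \<theta>\<in>\<Theta>. ennreal \<bar>F \<theta> \<omega>\<bar>)" by auto
    define t where "t = \<epsilon> / 2 + \<delta>"
    have t: "0 \<le> t" "t < \<epsilon>" using \<delta> unfolding t_def by auto
    then have "ennreal t < ennreal \<epsilon>" by (simp add: ennreal_less_iff)
    then have "ennreal t < (SUP \<theta>\<in>\<Theta>. ennreal \<bar>F \<theta> \<omega>\<bar>)"
      using ge by (rule order.strict_trans2)
    then obtain \<theta> where \<theta>: "\<theta> \<in> \<Theta>" and "ennreal t < ennreal \<bar>F \<theta> \<omega>\<bar>"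
      by (auto simp: less_SUP_iff)
    with t have "\<epsilon> / 2 + \<delta> < \<bar>F \<theta> \<omega>\<bar>" unfolding t_def by (simp add: ennreal_less_iff)
    moreover obtain \<eta> where "\<eta> \<in> G" and "\<bar>F \<theta> \<omega> - F \<eta> \<omega>\<bar> \<le> \<delta>" using net[OF \<theta>] \<omega> by blast
    ultimately show "\<omega> \<in> (\<Union>\<eta>\<in>G. {\<omega> \<in> space M. \<epsilon> / 2 \<le> \<bar>F \<eta> \<omega>\<bar>})" using \<omega> by force
  qed
  then have "measure M {\<omega> \<in> space M. ennreal \<epsilon> \<le> (SUP \<theta>\<in>\<Theta>. ennreal \<bar>F \<theta> \<omega>\<bar>)}
      \<le> measure M (\<Union>\<eta>\<in>G. {\<omega> \<in> space M. \<epsilon> / 2 \<le> \<bar>F \<eta> \<omega>\<bar>})"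
    using G sets by (intro finite_measure_mono) auto
  also have "\<dots> \<le> (\<Sum>\<eta>\<in>G. measure M {\<omega> \<in> space M. \<epsilon> / 2 \<le> \<bar>F \<eta> \<omega>\<bar>})"
    using G sets by (intro finite_measure_subadditive_finite) auto
  finally show ?thesis .
qed

context prob_space
begin

lemma hoeffding_sample_mean_abs:
  fixes Z :: "nat \<Rightarrow> 'a \<Rightarrow> real"
  assumes n: "n \<ge> 1" and ab: "a < b" and t: "t \<ge> 0"
    and indep: "indep_vars (\<lambda>_. borel) Z {1..n}"
    and ident: "\<And>m. m \<in> {1..n} \<Longrightarrow> distr M borel (Z m) = distr M borel (Z 1)"
    and range: "\<And>m \<omega>. m \<in> {1..n} \<Longrightarrow> \<omega> \<in> space M \<Longrightarrow> Z m \<omega> \<in> {a..b}"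
  shows "prob {\<omega> \<in> space M. t \<le> \<bar>(\<Sum>m=1..n. Z m \<omega>) / real n - expectation (Z 1)\<bar>}
    \<le> 2 * exp (-2 * real n * t ^ 2 / (b - a) ^ 2)"
proof -
  interpret H: Hoeffding_ineq_iid M "{1..n}" Z "Z 1" a b "expectation (Z 1)"
  proof unfold_locales
    show "finite {1..n}" by simp
    show "indep_vars (\<lambda>_. borel) Z {1..n}" by (rule indep)
    show "distr M borel (Z m) = distr M borel (Z 1)" if "m \<in> {1..n}" for m
      using that by (rule ident)
    show "random_variable borel (Z 1)"
      using indep n unfolding indep_vars_def by auto
    show "AE \<omega> in M. Z 1 \<omega> \<in> {a..b}" by (intro AE_I2 range) (use n in auto)
  qed
  have "prob {\<omega> \<in> space M. t \<le> \<bar>(\<Sum>m\<in>{1..n}. Z m \<omega>) / real (card {1..n}) - expectation (Z 1)\<bar>}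
      \<le> 2 * exp (-2 * real (card {1..n}) * t ^ 2 / (b - a) ^ 2)"
    by (rule H.Hoeffding_ineq_abs_ge'[OF t ab]) (use n in auto)
  then show ?thesis by simp
qed

lemma sample_mean_deviation_diff:
  fixes Z Z' :: "nat \<Rightarrow> 'a \<Rightarrow> real"
  assumes n: "n \<ge> 1" and \<omega>: "\<omega> \<in> space M"
    and close: "\<And>m \<omega>. m \<in> {1..n} \<Longrightarrow> \<omega> \<in> space M \<Longrightarrow> \<bar>Z m \<omega> - Z' m \<omega>\<bar> \<le> c"
    and int: "integrable M (Z 1)" "integrable M (Z' 1)"
  shows "\<bar>((\<Sum>m=1..n. Z m \<omega>) / real n - expectation (Z 1))
         - ((\<Sum>m=1..n. Z' m \<omega>) / real n - expectation (Z' 1))\<bar> \<le> 2 * c"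
proof -
  have "\<bar>(\<Sum>m=1..n. Z m \<omega>) / real n - (\<Sum>m=1..n. Z' m \<omega>) / real n\<bar>
      = \<bar>\<Sum>m=1..n. Z m \<omega> - Z' m \<omega>\<bar> / real n"
    by (simp add: sum_subtractf diff_divide_distrib[symmetric])
  also have "\<dots> \<le> (\<Sum>m=1..n. c) / real n"
    using close \<omega> by (intro divide_right_mono order_trans[OF sum_abs] sum_mono) auto
  also have "\<dots> = c" using n by simp
  finally have mean: "\<bar>(\<Sum>m=1..n. Z m \<omega>) / real n - (\<Sum>m=1..n. Z' m \<omega>) / real n\<bar> \<le> c" .
  have "\<bar>expectation (Z 1) - expectation (Z' 1)\<bar> = \<bar>expectation (\<lambda>\<omega>. Z 1 \<omega> - Z' 1 \<omega>)\<bar>"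
    using int by simp
  also have "\<dots> \<le> expectation (\<lambda>\<omega>. \<bar>Z 1 \<omega> - Z' 1 \<omega>\<bar>)"
    by (rule integral_abs_bound)
  also have "\<dots> \<le> expectation (\<lambda>_. c)"
    using int close n by (intro integral_mono) auto
  also have "\<dots> = c" by (simp add: prob_space)
  finally have "\<bar>expectation (Z 1) - expectation (Z' 1)\<bar> \<le> c" .
  with mean show ?thesis by linarith
qed

lemma iid_compose:
  fixes V :: "'i \<Rightarrow> 'a \<Rightarrow> 'b" and g :: "'b \<Rightarrow> 'c"
  assumes indep: "indep_vars (\<lambda>_. N) V I" and ident: "\<And>i. i \<in> I \<Longrightarrow> distr M N (V i) = distr M N (V j)"
    and j: "j \<in> I" and g: "g \<in> measurable N K"
  shows "indep_vars (\<lambda>_. K) (\<lambda>i \<omega>. g (V i \<omega>)) I"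
    and "\<And>i. i \<in> I \<Longrightarrow> distr M K (\<lambda>\<omega>. g (V i \<omega>)) = distr M K (\<lambda>\<omega>. g (V j \<omega>))"
proof -
  show "indep_vars (\<lambda>_. K) (\<lambda>i \<omega>. g (V i \<omega>)) I"
    using indep_vars_compose2[OF indep, of "\<lambda>_. g" "\<lambda>_. K"] g by simp
  have V: "V i \<in> measurable M N" if "i \<in> I" for i
    using indep[unfolded indep_vars_def, THEN conjunct1] that by blast
  show "distr M K (\<lambda>\<omega>. g (V i \<omega>)) = distr M K (\<lambda>\<omega>. g (V j \<omega>))" if i: "i \<in> I" for i
  proof -
    have "distr M K (\<lambda>\<omega>. g (V i \<omega>)) = distr (distr M N (V i)) K g"
      using distr_distr[OF g V[OF i]] by (simp add: comp_def)
    also have "\<dots> = distr M K (\<lambda>\<omega>. g (V j \<omega>))"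
      using distr_distr[OF g V[OF j]] by (simp add: ident[OF i] comp_def)
    finally show ?thesis .
  qed
qed

end

locale lipschitz_iid_family = prob_space +
  fixes d n :: nat and R a b \<Lambda> :: real and Z :: "(nat \<Rightarrow> real) \<Rightarrow> nat \<Rightarrow> 'a \<Rightarrow> real"
  assumes n: "n \<ge> 1" and R: "R > 0" and ab: "a < b" and \<Lambda>: "\<Lambda> > 0"
    and indep: "\<theta> \<in> param_box d R \<Longrightarrow> indep_vars (\<lambda>_. borel) (Z \<theta>) {1..n}"
    and ident: "\<theta> \<in> param_box d R \<Longrightarrow> m \<in> {1..n} \<Longrightarrow> distr M borel (Z \<theta> m) = distr M borel (Z \<theta> 1)"
    and range: "\<theta> \<in> param_box d R \<Longrightarrow> m \<in> {1..n} \<Longrightarrow> \<omega> \<in> space M \<Longrightarrow> Z \<theta> m \<omega> \<in> {a..b}"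
    and lipschitz: "\<theta> \<in> param_box d R \<Longrightarrow> \<eta> \<in> param_box d R \<Longrightarrow> \<forall>i. \<bar>\<theta> i - \<eta> i\<bar> \<le> \<delta> \<Longrightarrow>
      m \<in> {1..n} \<Longrightarrow> \<omega> \<in> space M \<Longrightarrow> \<bar>Z \<theta> m \<omega> - Z \<eta> m \<omega>\<bar> \<le> \<Lambda> * \<delta>"
begin

definition deviation :: "(nat \<Rightarrow> real) \<Rightarrow> 'a \<Rightarrow> real" where
  "deviation \<theta> \<omega> = (\<Sum>m=1..n. Z \<theta> m \<omega>) / real n - expectation (Z \<theta> 1)"

lemma param_grid_subset: "param_grid d R k \<subseteq> param_box d R"
  using param_grid_subset_param_box R by simp

lemma measurable_Z: "\<theta> \<in> param_box d R \<Longrightarrow> m \<in> {1..n} \<Longrightarrow> Z \<theta> m \<in> borel_measurable M"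
  using indep[unfolded indep_vars_def, THEN conjunct1] by blast

lemma measurable_deviation: "\<theta> \<in> param_box d R \<Longrightarrow> deviation \<theta> \<in> borel_measurable M"
  unfolding deviation_def[abs_def] using measurable_Z by measurable

lemma integrable_Z: assumes "\<theta> \<in> param_box d R" shows "integrable M (Z \<theta> 1)"
proof (rule integrable_const_bound[where B="\<bar>a\<bar> + \<bar>b\<bar>"])
  have "Z \<theta> 1 \<omega> \<in> {a..b}" if "\<omega> \<in> space M" for \<omega>
    using range[OF assms _ that, of 1] n by simp
  then show "AE \<omega> in M. norm (Z \<theta> 1 \<omega>) \<le> \<bar>a\<bar> + \<bar>b\<bar>" by (intro AE_I2) fastforce
qed (use measurable_Z[OF assms] n in simp)

lemma deviation_param_grid_approx:
  assumes \<theta>: "\<theta> \<in> param_box d R" and k: "k \<ge> 1"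
  shows "\<exists>\<eta>\<in>param_grid d R k. \<forall>\<omega>\<in>space M. \<bar>deviation \<theta> \<omega> - deviation \<eta> \<omega>\<bar> \<le> 2 * (\<Lambda> * (R / real k))"
proof -
  obtain \<eta> where \<eta>: "\<eta> \<in> param_grid d R k" "\<forall>i. \<bar>\<theta> i - \<eta> i\<bar> \<le> R / real k"
    using param_grid_approx[OF R k \<theta>] .
  then have \<eta>_box: "\<eta> \<in> param_box d R" using param_grid_subset by blast
  have "\<bar>deviation \<theta> \<omega> - deviation \<eta> \<omega>\<bar> \<le> 2 * (\<Lambda> * (R / real k))" if "\<omega> \<in> space M" for \<omega>
    unfolding deviation_def
    by (rule sample_mean_deviation_diff[where Z="Z \<theta>" and Z'="Z \<eta>",
          OF n that lipschitz[OF \<theta> \<eta>_box \<eta>(2)] integrable_Z[OF \<theta>] integrable_Z[OF \<eta>_box]])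
  with \<eta>(1) show ?thesis by blast
qed

lemma measurable_SUP_deviation:
  "(\<lambda>\<omega>. SUP \<theta>\<in>param_box d R. ennreal \<bar>deviation \<theta> \<omega>\<bar>) \<in> borel_measurable M"
proof (rule borel_measurable_SUP_abs_dense)
  show "countable (\<Union>k\<in>{1..}. param_grid d R k)"
    by (rule countable_UN[OF countableI_type]) (auto intro: countable_finite finite_param_grid)
  show "(\<Union>k\<in>{1..}. param_grid d R k) \<subseteq> param_box d R"
    using param_grid_subset by blast
  show "\<exists>\<eta>\<in>\<Union>k\<in>{1..}. param_grid d R k. \<forall>\<omega>\<in>space M. \<bar>deviation \<theta> \<omega> - deviation \<eta> \<omega>\<bar> \<le> e"
    if \<theta>: "\<theta> \<in> param_box d R" and e: "e > 0" for \<theta> e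
  proof -
    define k where "k = nat \<lceil>2 * \<Lambda> * R / e\<rceil> + 1"
    have k: "k \<ge> 1" "real k > 0" unfolding k_def by simp_all
    have "2 * \<Lambda> * R / e \<le> real k" unfolding k_def by linarith
    then have "2 * \<Lambda> * R \<le> e * real k" using e by (simp add: pos_divide_le_eq mult.commute)
    then have bound: "2 * (\<Lambda> * (R / real k)) \<le> e" using k by (simp add: field_simps)
    obtain \<eta> where \<eta>: "\<eta> \<in> param_grid d R k"
      and close: "\<forall>\<omega>\<in>space M. \<bar>deviation \<theta> \<omega> - deviation \<eta> \<omega>\<bar> \<le> 2 * (\<Lambda> * (R / real k))"
      using deviation_param_grid_approx[OF \<theta> k(1)] by blast
    have "\<forall>\<omega>\<in>space M. \<bar>deviation \<theta> \<omega> - deviation \<eta> \<omega>\<bar> \<le> e" using close bound by (meson order_trans)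
    moreover have "\<eta> \<in> (\<Union>k\<in>{1..}. param_grid d R k)" using \<eta> k(1) by blast
    ultimately show ?thesis by blast
  qed
  show "deviation \<eta> \<in> borel_measurable M" if "\<eta> \<in> (\<Union>k\<in>{1..}. param_grid d R k)" for \<eta>
    using that param_grid_subset by (blast intro: measurable_deviation)
qed

lemma prob_deviation_ge:
  assumes "\<theta> \<in> param_box d R" and "t \<ge> 0"
  shows "prob {\<omega> \<in> space M. t \<le> \<bar>deviation \<theta> \<omega>\<bar>} \<le> 2 * exp (-2 * real n * t ^ 2 / (b - a) ^ 2)"
  unfolding deviation_def using assms by (intro hoeffding_sample_mean_abs[OF n ab] indep ident range) auto

lemma prob_SUP_deviation_ge_grid:
  assumes \<epsilon>: "\<epsilon> > 0" and N: "N \<ge> 1" and mesh: "8 * \<Lambda> * R \<le> \<epsilon> * real N"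
  shows "prob {\<omega> \<in> space M. ennreal \<epsilon> \<le> (SUP \<theta>\<in>param_box d R. ennreal \<bar>deviation \<theta> \<omega>\<bar>)}
    \<le> 2 * real N ^ d * exp (- (\<epsilon> ^ 2) * real n / (2 * (b - a) ^ 2))"
proof -
  have "prob {\<omega> \<in> space M. ennreal \<epsilon> \<le> (SUP \<theta>\<in>param_box d R. ennreal \<bar>deviation \<theta> \<omega>\<bar>)}
      \<le> (\<Sum>\<eta>\<in>param_grid d R N. prob {\<omega> \<in> space M. \<epsilon> / 2 \<le> \<bar>deviation \<eta> \<omega>\<bar>})"
  proof (rule measure_SUP_abs_ge_le_sum_net[OF finite_param_grid])
    show "0 \<le> 2 * (\<Lambda> * (R / real N))" using \<Lambda> R by simp
    have "0 < \<epsilon> * real N" "0 < real N" using \<epsilon> N by simp_all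
    then show "2 * (2 * (\<Lambda> * (R / real N))) < \<epsilon>"
      using mesh by (simp add: field_simps)
    show "\<exists>\<eta>\<in>param_grid d R N. \<forall>\<omega>\<in>space M. \<bar>deviation \<theta> \<omega> - deviation \<eta> \<omega>\<bar> \<le> 2 * (\<Lambda> * (R / real N))"
      if "\<theta> \<in> param_box d R" for \<theta>
      using deviation_param_grid_approx[OF that N] .
    show "deviation \<eta> \<in> borel_measurable M" if "\<eta> \<in> param_grid d R N" for \<eta>
      using that param_grid_subset by (blast intro: measurable_deviation)
  qed
  also have "\<dots> \<le> (\<Sum>\<eta>\<in>param_grid d R N. 2 * exp (-2 * real n * (\<epsilon> / 2) ^ 2 / (b - a) ^ 2))"
    using param_grid_subset \<epsilon> by (intro sum_mono prob_deviation_ge) auto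
  also have "\<dots> \<le> real N ^ d * (2 * exp (-2 * real n * (\<epsilon> / 2) ^ 2 / (b - a) ^ 2))"
    using card_param_grid_le[of d R N] by (simp flip: of_nat_power)
  also have "\<dots> = 2 * real N ^ d * exp (- (\<epsilon> ^ 2) * real n / (2 * (b - a) ^ 2))"
    by (simp add: power_divide)
  finally show ?thesis .
qed

lemma prob_SUP_deviation_ge:
  assumes \<epsilon>: "\<epsilon> > 0"
  shows "prob {\<omega> \<in> space M. ennreal \<epsilon> \<le> (SUP \<theta>\<in>param_box d R. ennreal \<bar>deviation \<theta> \<omega>\<bar>)}
    \<le> 2 * max 1 ((16 * \<Lambda> * R / \<epsilon>) ^ d) * exp (- (\<epsilon> ^ 2) * real n / (2 * (b - a) ^ 2))"
proof -
  define K where "K = 16 * \<Lambda> * R / \<epsilon>"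
  have "K > 0" unfolding K_def using \<Lambda> R \<epsilon> by simp
  then have N: "nat \<lceil>K / 2\<rceil> \<ge> 1" by linarith
  have "8 * \<Lambda> * R = \<epsilon> * (K / 2)" unfolding K_def using \<epsilon> by simp
  also have "\<dots> \<le> \<epsilon> * real (nat \<lceil>K / 2\<rceil>)" using \<epsilon> by (intro mult_left_mono) linarith+
  finally have "prob {\<omega> \<in> space M. ennreal \<epsilon> \<le> (SUP \<theta>\<in>param_box d R. ennreal \<bar>deviation \<theta> \<omega>\<bar>)}
      \<le> 2 * real (nat \<lceil>K / 2\<rceil>) ^ d * exp (- (\<epsilon> ^ 2) * real n / (2 * (b - a) ^ 2))"
    by (rule prob_SUP_deviation_ge_grid[OF \<epsilon> N])
  also have "\<dots> \<le> 2 * max 1 (K ^ d) * exp (- (\<epsilon> ^ 2) * real n / (2 * (b - a) ^ 2))"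
    using real_nat_ceiling_half_power_le[OF \<open>K > 0\<close>, of d]
    by (intro mult_right_mono mult_left_mono) auto
  finally show ?thesis unfolding K_def .
qed

end

theorem lemma3p21:
  fixes d M L :: nat and u v R \<epsilon> b :: real and l :: "nat list"
    and D :: "(nat \<Rightarrow> real) set"
    and P :: "'a measure"
    and X :: "nat \<Rightarrow> 'a \<Rightarrow> (nat \<Rightarrow> real)" and Y :: "nat \<Rightarrow> 'a \<Rightarrow> real"
    and \<E> :: "((nat \<Rightarrow> real) \<Rightarrow> real) \<Rightarrow> real"
    and \<E>emp :: "(nat \<Rightarrow> real) \<Rightarrow> 'a \<Rightarrow> real"
    and S :: "'a \<Rightarrow> ennreal"
  assumes "d \<ge> 1" and "M \<ge> 1" and "L \<ge> 1"
    and "u < v" and "R \<ge> 1" and "\<epsilon> > 0" and "b > 0"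
    and "length l = L + 1" and "\<forall>k \<in> set l. k \<ge> 1" and "l ! L = 1"
    and "arch_offset l L \<le> d"
    and "D \<subseteq> PiE {1..l ! 0} (\<lambda>_. {-b..b})" and "compact D"
    and "prob_space P"
    and "\<forall>m\<in>{1..M}. \<forall>\<omega>\<in>space P. X m \<omega> \<in> D \<and> Y m \<omega> \<in> {u..v}"
    and "\<forall>m\<in>{1..M}. X m \<in> measurable P (PiM {1..l ! 0} (\<lambda>_. borel))"
    and "\<forall>m\<in>{1..M}. Y m \<in> borel_measurable P"
    and "prob_space.indep_vars P (\<lambda>_. PiM {1..l ! 0} (\<lambda>_. borel) \<Otimes>\<^sub>M borel)
           (\<lambda>m \<omega>. (X m \<omega>, Y m \<omega>)) {1..M}"
    and "\<forall>m\<in>{1..M}. distr P (PiM {1..l ! 0} (\<lambda>_. borel) \<Otimes>\<^sub>M borel) (\<lambda>\<omega>. (X m \<omega>, Y m \<omega>))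
           = distr P (PiM {1..l ! 0} (\<lambda>_. borel) \<Otimes>\<^sub>M borel) (\<lambda>\<omega>. (X 1 \<omega>, Y 1 \<omega>))"
  defines "\<E> \<equiv> \<lambda>f. integral\<^sup>L P (\<lambda>\<omega>. \<bar>f (X 1 \<omega>) - Y 1 \<omega>\<bar> ^ 2)"
    and "\<E>emp \<equiv> \<lambda>\<theta> \<omega>. (1 / real M) * (\<Sum>m=1..M. \<bar>clipped_net \<theta> l u v (X m \<omega>) 1 - Y m \<omega>\<bar> ^ 2)"
    and "S \<equiv> \<lambda>\<omega>. (SUP \<theta>\<in>param_box d R.
              ennreal \<bar>\<E>emp \<theta> \<omega> - \<E> (\<lambda>x. clipped_net \<theta> l u v x 1)\<bar>)"
  shows "S \<in> borel_measurable P \<and>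
         measure P {\<omega> \<in> space P. S \<omega> \<ge> ennreal \<epsilon>}
         \<le> 2 * max 1 ((32 * real L * max 1 b * (real (Max (set l)) + 1) ^ L * R ^ L * (v - u) / \<epsilon>) ^ d)
             * exp (- (\<epsilon> ^ 2) * real M / (2 * (v - u) ^ 4))"
proof -
  interpret prob_space P by fact
  let ?Mxy = "PiM {1..l ! 0} (\<lambda>_. borel) \<Otimes>\<^sub>M (borel :: real measure)"
  define loss where "loss \<theta> p = \<bar>clipped_net \<theta> l u v (fst p) 1 - snd p\<bar> ^ 2" for \<theta> p
  define \<Lambda> where "\<Lambda> = 2 * (v - u) * (real L * max 1 b * (real (Max (set l)) + 1) ^ L * R ^ (L - 1))"
  have net: "length l = L + 1" "L \<ge> 1" "l ! L \<ge> 1" using assms(3,8,10) by auto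
  have loss_measurable: "loss \<theta> \<in> borel_measurable ?Mxy" for \<theta>
    using measurable_clipped_net[OF net] unfolding loss_def by measurable
  interpret lipschitz_iid_family P d M R 0 "(v - u) ^ 2" \<Lambda> "\<lambda>\<theta> m \<omega>. loss \<theta> (X m \<omega>, Y m \<omega>)"
  proof unfold_locales
    show "0 < \<Lambda>" unfolding \<Lambda>_def using assms(3-5) by simp
    show "indep_vars (\<lambda>_. borel) (\<lambda>m \<omega>. loss \<theta> (X m \<omega>, Y m \<omega>)) {1..M}" for \<theta>
      using iid_compose(1)[OF assms(18) assms(19)[rule_format] _ loss_measurable] assms(2) by simp
    show "distr P borel (\<lambda>\<omega>. loss \<theta> (X m \<omega>, Y m \<omega>)) = distr P borel (\<lambda>\<omega>. loss \<theta> (X 1 \<omega>, Y 1 \<omega>))"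
      if "m \<in> {1..M}" for \<theta> m
      using iid_compose(2)[OF assms(18) assms(19)[rule_format] _ loss_measurable that] assms(2) by simp
    show "loss \<theta> (X m \<omega>, Y m \<omega>) \<in> {0..(v - u) ^ 2}" if "m \<in> {1..M}" "\<omega> \<in> space P" for \<theta> m \<omega>
      unfolding loss_def fst_conv snd_conv using assms(15) that
      by (intro clipped_net_sq_loss_range[OF net(1,3)]) blast
    show "\<bar>loss \<theta> (X m \<omega>, Y m \<omega>) - loss \<eta> (X m \<omega>, Y m \<omega>)\<bar> \<le> \<Lambda> * \<delta>"
      if "\<theta> \<in> param_box d R" "\<eta> \<in> param_box d R" "\<forall>i. \<bar>\<theta> i - \<eta> i\<bar> \<le> \<delta>"
        and "m \<in> {1..M}" "\<omega> \<in> space P" for \<theta> \<eta> \<delta> m \<omega>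
      unfolding loss_def \<Lambda>_def fst_conv snd_conv using assms(12,15) that
      by (intro clipped_net_sq_loss_param_diff[OF that(1-3) assms(5) _ _ net]) blast+
  qed (use assms(2,4,5,14) in auto)
  have S_eq: "S = (\<lambda>\<omega>. SUP \<theta>\<in>param_box d R. ennreal \<bar>deviation \<theta> \<omega>\<bar>)"
    unfolding assms(20-22) deviation_def by (simp add: loss_def)
  have K_eq: "16 * \<Lambda> * R / \<epsilon>
      = 32 * real L * max 1 b * (real (Max (set l)) + 1) ^ L * R ^ L * (v - u) / \<epsilon>"
    unfolding \<Lambda>_def using net(2) by (cases L) (simp_all add: field_simps)
  have exponent_eq: "((v - u) ^ 2 - 0) ^ 2 = (v - u) ^ 4" using power_mult[of "v - u" 2 2] by simp
  show ?thesis (is "?measurable \<and> ?bound")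
  proof
    show ?measurable unfolding S_eq by (rule measurable_SUP_deviation)
    show ?bound using prob_SUP_deviation_ge[OF assms(6)] unfolding S_eq K_eq exponent_eq .
  qed
qed

end
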